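(* Consider the generative logic with $\mu\to1$ in the setting below. Let $\Delta$ be a finite multiset of time-indexed formulas such that $E'(\Delta)\neq\emptyset$. Then for every $k\in\{1,\dots,K\}$, $$p(D=d_k\mid\Delta)=\begin{cases}\frac{1}{|E'(\Delta)|}&\text{if }k\in E'(\Delta),\\ 0&\text{otherwise.}\end{cases}$$
   Context: Let $\mathcal{L}$ be a propositional language and let $K,T\ge1$. There are data sequences $d_1,\dots,d_K$; repetitions are allowed, and data are identified by their index $k$. Each $d_k$ is associated with a sequence of models $m(d_k)=(m(d_k)^1,\dots,m(d_k)^T)$ of $\mathcal{L}$. The prior is $p(D=d_k)=1/K$. A time-indexed formula is written $\alpha^t$, with $\alpha\in\mathcal{L}$ and $1\le t\le T$. Write $[\![\alpha^t]\!]_k=1$ if $\alpha$ is true in $m(d_k)^t$, and $0$ otherwise. For $\mu\in(0,1)$ and a finite multiset $X$ of time-indexed formulas, define $$p(X\mid d_k,\mu)=\prod_{\alpha^t\in X}\mu^{[\![\alpha^t]\!]_k}(1-\mu)^{1-[\![\alpha^t]\!]_k}.$$ Then define $$p(D=d_k\mid\Delta)=\lim_{\mu\to1}\frac{p(\Delta\mid d_k,\mu)\,p(d_k)}{\sum_j p(\Delta\mid d_j,\mu)\,p(d_j)}.$$ An index $k$ is an evidence of $X$ if $[\![\alpha^t]\!]_k=1$ for all $\alpha^t\in X$. Let $E(X)$ be the set of such indices. $X$ is called founded if $E(X)\neq\emptyset$. Let $MFS(\Delta)$ be the set of nonempty founded sub-multisets $S\subseteq\Delta$ that have maximum cardinality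 among all nonempty founded sub-multisets of $\Delta$. Set $E'(\Delta)=\bigcup_{S\in MFS(\Delta)}E(S)$. This union is empty if $MFS(\Delta)=\emptyset$. *)

theory Defs
  imports "HOL-Analysis.Analysis" "HOL-Library.Multiset"
begin

datatype 'a form = Atom 'a | Bot | Neg "'a form" | Conj "'a form" "'a form"
  | Disj "'a form" "'a form" | Imp "'a form" "'a form"

fun holds :: "('a \<Rightarrow> bool) \<Rightarrow> 'a form \<Rightarrow> bool" where
  "holds v (Atom a) = v a"
| "holds v Bot = False"
| "holds v (Neg f) = (\<not> holds v f)"
| "holds v (Conj f g) = (holds v f \<and> holds v g)"
| "holds v (Disj f g) = (holds v f \<or> holds v g)"
| "holds v (Imp f g) = (holds v f \<longrightarrow> holds v g)"

text \<open>A time-indexed formula alpha^t is a pair (alpha, t).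
  m k t is the model m(d_k)^t.  truth value [[alpha^t]]_k:\<close>
definition tv :: "(nat \<Rightarrow> nat \<Rightarrow> ('a \<Rightarrow> bool)) \<Rightarrow> nat \<Rightarrow> 'a form \<times> nat \<Rightarrow> bool" where
  "tv m k x = holds (m k (snd x)) (fst x)"

definition likelihood :: "(nat \<Rightarrow> nat \<Rightarrow> ('a \<Rightarrow> bool)) \<Rightarrow> ('a form \<times> nat) multiset
    \<Rightarrow> nat \<Rightarrow> real \<Rightarrow> real" where
  "likelihood m X k \<mu> = (\<Prod>x\<in>#X. (if tv m k x then \<mu> else 1 - \<mu>))"

definition post_mu :: "nat \<Rightarrow> (nat \<Rightarrow> nat \<Rightarrow> ('a \<Rightarrow> bool)) \<Rightarrow> ('a form \<times> nat) multiset
    \<Rightarrow> nat \<Rightarrow> real \<Rightarrow> real" where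
  "post_mu K m \<Delta> k \<mu> = likelihood m \<Delta> k \<mu> * (1 / real K)
      / (\<Sum>j=1..K. likelihood m \<Delta> j \<mu> * (1 / real K))"

definition evidence :: "nat \<Rightarrow> (nat \<Rightarrow> nat \<Rightarrow> ('a \<Rightarrow> bool)) \<Rightarrow> ('a form \<times> nat) multiset
    \<Rightarrow> nat set" where
  "evidence K m X = {k \<in> {1..K}. \<forall>x\<in>#X. tv m k x}"

definition founded :: "nat \<Rightarrow> (nat \<Rightarrow> nat \<Rightarrow> ('a \<Rightarrow> bool)) \<Rightarrow> ('a form \<times> nat) multiset \<Rightarrow> bool" where
  "founded K m X \<longleftrightarrow> evidence K m X \<noteq> {}"

definition MFS :: "nat \<Rightarrow> (nat \<Rightarrow> nat \<Rightarrow> ('a \<Rightarrow> bool)) \<Rightarrow> ('a form \<times> nat) multiset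
    \<Rightarrow> ('a form \<times> nat) multiset set" where
  "MFS K m \<Delta> = {S. S \<subseteq># \<Delta> \<and> S \<noteq> {#} \<and> founded K m S \<and>
      (\<forall>S'. S' \<subseteq># \<Delta> \<and> S' \<noteq> {#} \<and> founded K m S' \<longrightarrow> size S' \<le> size S)}"

definition evidence' :: "nat \<Rightarrow> (nat \<Rightarrow> nat \<Rightarrow> ('a \<Rightarrow> bool)) \<Rightarrow> ('a form \<times> nat) multiset
    \<Rightarrow> nat set" where
  "evidence' K m \<Delta> = (\<Union>S\<in>MFS K m \<Delta>. evidence K m S)"

end

theory Submission
  imports Defs
begin

text \<open>Writing \<open>a\<^sub>j\<close> for the number of formulas of \<open>\<Delta>\<close> true at \<open>d\<^sub>j\<close>, the likelihood of \<open>d\<^sub>j\<close>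
  is \<open>\<mu>\<^bsup>a\<^sub>j\<^esup> (1 - \<mu>)\<^bsup>|\<Delta>| - a\<^sub>j\<^esup>\<close>. The satisfied part of \<open>\<Delta>\<close> at \<open>d\<^sub>j\<close> is founded, and every founded
  sub-multiset with evidence \<open>j\<close> lies inside it, so the maximal founded subsets are exactly the
  maximal satisfied parts and \<open>E'(\<Delta>)\<close> is the set of maximisers of \<open>a\<^sub>j\<close>. After dividing out
  the common factor \<open>(1 - \<mu>)\<^bsup>|\<Delta>| - max a\<^esup>\<close>, the weight of \<open>d\<^sub>j\<close> tends to \<open>1\<close> if \<open>a\<^sub>j\<close> is maximal
  and to \<open>0\<close> otherwise, which gives the uniform distribution on \<open>E'(\<Delta>)\<close>.\<close>

abbreviation satisfied :: "(nat \<Rightarrow> nat \<Rightarrow> ('a \<Rightarrow> bool)) \<Rightarrow> nat \<Rightarrow> ('a form \<times> nat) multiset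
    \<Rightarrow> ('a form \<times> nat) multiset" where
  "satisfied m j X \<equiv> filter_mset (tv m j) X"

lemma likelihood_eq_power:
  "likelihood m X j \<mu> = \<mu> ^ size (satisfied m j X) * (1 - \<mu>) ^ (size X - size (satisfied m j X))"
  unfolding likelihood_def
  by (induction X) (auto simp: algebra_simps Suc_diff_le)

lemma post_mu_eq_likelihood_ratio:
  "post_mu K m \<Delta> k \<mu> = likelihood m \<Delta> k \<mu> / (\<Sum>j=1..K. likelihood m \<Delta> j \<mu>)"
  unfolding post_mu_def sum_distrib_right[symmetric] by (cases "K = 0") simp_all

lemma in_evidence_satisfied: "j \<in> {1..K} \<Longrightarrow> j \<in> evidence K m (satisfied m j X)"
  unfolding evidence_def by auto

lemma subseteq_satisfied_if_in_evidence:
  assumes "S \<subseteq># \<Delta>" and "j \<in> evidence K m S"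
  shows "S \<subseteq># satisfied m j \<Delta>"
  using filter_mset_mono_strong[OF assms(1), of "\<lambda>_. True" "tv m j"] assms(2)
  by (simp add: evidence_def)

lemma size_satisfied_le_MFS:
  assumes "S \<in> MFS K m \<Delta>" and "j \<in> {1..K}"
  shows "size (satisfied m j \<Delta>) \<le> size S"
proof (cases "satisfied m j \<Delta> = {#}")
  case False
  have "founded K m (satisfied m j \<Delta>)"
    using in_evidence_satisfied[OF assms(2)] by (auto simp: founded_def)
  with False assms(1) show ?thesis by (simp add: MFS_def)
next
  case True
  then show ?thesis by (metis size_empty zero_le)
qed

lemma size_MFS_le_satisfied:
  "S \<in> MFS K m \<Delta> \<Longrightarrow> j \<in> evidence K m S \<Longrightarrow> size S \<le> size (satisfied m j \<Delta>)"
  by (intro size_mset_mono subseteq_satisfied_if_in_evidence) (simp_all add: MFS_def)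

lemma satisfied_in_MFS:
  assumes "S \<in> MFS K m \<Delta>" and "j \<in> {1..K}" and "size S \<le> size (satisfied m j \<Delta>)"
  shows "satisfied m j \<Delta> \<in> MFS K m \<Delta>"
proof -
  have "S \<noteq> {#}" using assms(1) by (simp add: MFS_def)
  have "satisfied m j \<Delta> \<noteq> {#}"
  proof
    assume "satisfied m j \<Delta> = {#}"
    with assms(3) have "size S = 0" by simp
    with \<open>S \<noteq> {#}\<close> show False by simp
  qed
  moreover have "founded K m (satisfied m j \<Delta>)"
    using in_evidence_satisfied[OF assms(2)] by (auto simp: founded_def)
  moreover have "size S' \<le> size (satisfied m j \<Delta>)"
    if "S' \<subseteq># \<Delta>" "S' \<noteq> {#}" "founded K m S'" for S'
    using assms(1,3) that by (force simp: MFS_def)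
  ultimately show ?thesis by (simp add: MFS_def)
qed

lemma evidence'_eq_argmax_satisfied:
  assumes "evidence' K m \<Delta> \<noteq> {}"
  shows "evidence' K m \<Delta> =
    {j \<in> {1..K}. \<forall>i\<in>{1..K}. size (satisfied m i \<Delta>) \<le> size (satisfied m j \<Delta>)}"
proof (intro equalityI subsetI)
  fix j assume "j \<in> evidence' K m \<Delta>"
  then obtain S where S: "S \<in> MFS K m \<Delta>" and j: "j \<in> evidence K m S"
    unfolding evidence'_def by auto
  have "j \<in> {1..K}" using j by (simp add: evidence_def)
  with size_satisfied_le_MFS[OF S] size_MFS_le_satisfied[OF S j]
  show "j \<in> {j \<in> {1..K}. \<forall>i\<in>{1..K}. size (satisfied m i \<Delta>) \<le> size (satisfied m j \<Delta>)}"
    by force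
next
  fix j assume "j \<in> {j \<in> {1..K}. \<forall>i\<in>{1..K}. size (satisfied m i \<Delta>) \<le> size (satisfied m j \<Delta>)}"
  then have jK: "j \<in> {1..K}" and max: "\<forall>i\<in>{1..K}. size (satisfied m i \<Delta>) \<le> size (satisfied m j \<Delta>)"
    by auto
  from assms obtain S i where S: "S \<in> MFS K m \<Delta>" and i: "i \<in> evidence K m S"
    unfolding evidence'_def by auto
  have "i \<in> {1..K}" using i by (simp add: evidence_def)
  then have "size S \<le> size (satisfied m j \<Delta>)"
    using size_MFS_le_satisfied[OF S i] max by (meson order_trans)
  then have "satisfied m j \<Delta> \<in> MFS K m \<Delta>" by (rule satisfied_in_MFS[OF S jK])
  with in_evidence_satisfied[OF jK] show "j \<in> evidence' K m \<Delta>"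
    unfolding evidence'_def by auto
qed

lemma tendsto_normalized_power_weights:
  fixes a :: "'i \<Rightarrow> nat"
  assumes "finite J" and "k \<in> J" and "\<forall>j\<in>J. a j \<le> n"
  defines "A \<equiv> {j \<in> J. \<forall>i\<in>J. a i \<le> a j}"
  shows "((\<lambda>\<mu>::real. \<mu> ^ a k * (1 - \<mu>) ^ (n - a k) / (\<Sum>j\<in>J. \<mu> ^ a j * (1 - \<mu>) ^ (n - a j)))
           \<longlongrightarrow> (if k \<in> A then 1 / real (card A) else 0)) (at_left 1)"
proof -
  define M where "M = Max (a ` J)"
  have aM: "a j \<le> M" if "j \<in> J" for j
    using assms(1) that by (simp add: M_def)
  have "M \<in> a ` J" unfolding M_def using assms(1,2) by (intro Max_in) auto
  then have "M \<le> n" using assms(3) by auto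
  have A_eq: "A = {j \<in> J. a j = M}"
    using aM \<open>M \<in> a ` J\<close> unfolding A_def by (auto intro: antisym)
  have "A \<noteq> {}" using \<open>M \<in> a ` J\<close> by (auto simp: A_eq)
  then have card_A: "real (card A) \<noteq> 0" using assms(1) by (simp add: A_def)
  define g where "g j \<mu> = \<mu> ^ a j * (1 - \<mu>) ^ (M - a j)" for j and \<mu> :: real
  have factor: "\<mu> ^ a j * (1 - \<mu>) ^ (n - a j) = (1 - \<mu>) ^ (n - M) * g j \<mu>" if "j \<in> J" for j \<mu>
  proof -
    have "n - a j = (M - a j) + (n - M)" using aM[OF that] \<open>M \<le> n\<close> by linarith
    then show ?thesis by (simp add: g_def power_add)
  qed
  have g_at_1: "g j 1 = (if j \<in> A then 1 else 0)" if "j \<in> J" for j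
    using aM[OF that] that by (auto simp: g_def A_eq)
  have sum_g_at_1: "(\<Sum>j\<in>J. g j 1) = real (card A)"
  proof -
    have "(\<Sum>j\<in>J. g j 1) = (\<Sum>j\<in>J. if j \<in> A then 1 else 0)"
      by (rule sum.cong) (simp_all add: g_at_1)
    also have "\<dots> = real (card A)"
      using assms(1) by (simp add: sum.If_cases A_def Int_def)
    finally show ?thesis .
  qed
  have g_tendsto: "(g j \<longlongrightarrow> g j 1) (at_left 1)" for j
    unfolding g_def by (intro tendsto_intros)
  have "((\<lambda>\<mu>. g k \<mu> / (\<Sum>j\<in>J. g j \<mu>)) \<longlongrightarrow> g k 1 / (\<Sum>j\<in>J. g j 1)) (at_left 1)"
    using card_A sum_g_at_1 by (intro tendsto_divide g_tendsto tendsto_sum) simp_all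
  also have "g k 1 / (\<Sum>j\<in>J. g j 1) = (if k \<in> A then 1 / real (card A) else 0)"
    using g_at_1[OF assms(2)] sum_g_at_1 by simp
  finally have "((\<lambda>\<mu>. g k \<mu> / (\<Sum>j\<in>J. g j \<mu>)) \<longlongrightarrow> (if k \<in> A then 1 / real (card A) else 0))
      (at_left 1)" .
  moreover have "\<forall>\<^sub>F \<mu> in at_left 1. g k \<mu> / (\<Sum>j\<in>J. g j \<mu>) =
      \<mu> ^ a k * (1 - \<mu>) ^ (n - a k) / (\<Sum>j\<in>J. \<mu> ^ a j * (1 - \<mu>) ^ (n - a j))"
    using eventually_at_left_real[OF zero_less_one]
  proof eventually_elim
    case (elim \<mu>)
    have sum_factor: "(\<Sum>j\<in>J. \<mu> ^ a j * (1 - \<mu>) ^ (n - a j)) = (1 - \<mu>) ^ (n - M) * (\<Sum>j\<in>J. g j \<mu>)"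
      unfolding sum_distrib_left by (rule sum.cong) (simp_all add: factor)
    have common_nonzero: "(1 - \<mu>) ^ (n - M) \<noteq> 0" using elim by simp
    show ?case
      by (simp only: sum_factor factor[OF assms(2)]
          nonzero_mult_divide_mult_cancel_left[OF common_nonzero])
  qed
  ultimately show ?thesis
    by (rule tendsto_cong[THEN iffD1, rotated])
qed

theorem theorem3:
  fixes K T :: nat and m :: "nat \<Rightarrow> nat \<Rightarrow> ('a \<Rightarrow> bool)"
    and \<Delta> :: "('a form \<times> nat) multiset" and k :: nat
  assumes "K \<ge> 1" and "T \<ge> 1"
    and "\<forall>x\<in>#\<Delta>. 1 \<le> snd x \<and> snd x \<le> T"
    and "evidence' K m \<Delta> \<noteq> {}"
    and "k \<in> {1..K}"
  shows "(post_mu K m \<Delta> k \<longlongrightarrow>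
           (if k \<in> evidence' K m \<Delta> then 1 / real (card (evidence' K m \<Delta>)) else 0))
         (at_left 1)"
proof -
  \<comment> \<open>Neither \<open>K \<ge> 1\<close> nor the bounds on the time indices are needed.\<close>
  define a where "a j = size (satisfied m j \<Delta>)" for j
  have post: "post_mu K m \<Delta> k = (\<lambda>\<mu>. \<mu> ^ a k * (1 - \<mu>) ^ (size \<Delta> - a k) /
      (\<Sum>j=1..K. \<mu> ^ a j * (1 - \<mu>) ^ (size \<Delta> - a j)))"
    by (simp add: fun_eq_iff post_mu_eq_likelihood_ratio likelihood_eq_power a_def)
  have argmax: "evidence' K m \<Delta> = {j \<in> {1..K}. \<forall>i\<in>{1..K}. a i \<le> a j}"
    using evidence'_eq_argmax_satisfied[OF assms(4)] by (simp add: a_def)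
  have "\<forall>j\<in>{1..K}. a j \<le> size \<Delta>" by (simp add: a_def)
  from tendsto_normalized_power_weights[OF finite_atLeastAtMost assms(5) this]
  show ?thesis unfolding post argmax .
qed

end
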